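(* Let $G$ be a unit square graph. Then $G$ has no induced subgraph isomorphic to $K_{2,3}$, to $\overline{3K_2}$, or to $\overline{T_2}$.
   Context: A unit square graph is a graph $G$ admitting $f\colon V(G)\to\mathbb{R}^2$ with $vw\in E(G)$ iff $\|f(v)-f(w)\|_\infty\le1$ for distinct $v,w$. $\overline{H}$ denotes the complement of $H$; $3K_2$ is the disjoint union of three edges. $T_2$ is the tree on vertices $w_1,\dots,w_7$ with edges $w_1w_2, w_1w_4, w_1w_6, w_2w_3, w_4w_5, w_6w_7$ (a claw with each edge subdivided once). *)

theory Defs
  imports "HOL-Analysis.Analysis"
begin

definition simple_graph :: "'a set \<Rightarrow> ('a \<Rightarrow> 'a \<Rightarrow> bool) \<Rightarrow> bool" where
  "simple_graph V E \<longleftrightarrow>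
     (\<forall>v w. E v w \<longrightarrow> v \<in> V \<and> w \<in> V \<and> v \<noteq> w \<and> E w v)"

definition unit_square_graph :: "'a set \<Rightarrow> ('a \<Rightarrow> 'a \<Rightarrow> bool) \<Rightarrow> bool" where
  "unit_square_graph V E \<longleftrightarrow> simple_graph V E \<and>
     (\<exists>f :: 'a \<Rightarrow> real \<times> real. \<forall>v\<in>V. \<forall>w\<in>V. v \<noteq> w \<longrightarrow>
        (E v w \<longleftrightarrow> max \<bar>fst (f v) - fst (f w)\<bar> \<bar>snd (f v) - snd (f w)\<bar> \<le> 1))"

definition has_induced_subgraph ::
  "'a set \<Rightarrow> ('a \<Rightarrow> 'a \<Rightarrow> bool) \<Rightarrow> 'b set \<Rightarrow> ('b \<Rightarrow> 'b \<Rightarrow> bool) \<Rightarrow> bool" where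
  "has_induced_subgraph V E VH EH \<longleftrightarrow>
     (\<exists>\<phi>. inj_on \<phi> VH \<and> \<phi> ` VH \<subseteq> V \<and>
        (\<forall>u\<in>VH. \<forall>v\<in>VH. u \<noteq> v \<longrightarrow> (E (\<phi> u) (\<phi> v) \<longleftrightarrow> EH u v)))"

definition compl_graph :: "'a set \<Rightarrow> ('a \<Rightarrow> 'a \<Rightarrow> bool) \<Rightarrow> 'a \<Rightarrow> 'a \<Rightarrow> bool" where
  "compl_graph V E = (\<lambda>u v. u \<in> V \<and> v \<in> V \<and> u \<noteq> v \<and> \<not> E u v)"

definition K23_V :: "nat set" where "K23_V = {0..4}"
definition K23_E :: "nat \<Rightarrow> nat \<Rightarrow> bool" where
  "K23_E u v \<longleftrightarrow> u \<in> K23_V \<and> v \<in> K23_V \<and> ((u < 2 \<and> 2 \<le> v) \<or> (v < 2 \<and> 2 \<le> u))"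

definition threeK2_V :: "nat set" where "threeK2_V = {0..5}"
definition threeK2_E :: "nat \<Rightarrow> nat \<Rightarrow> bool" where
  "threeK2_E u v \<longleftrightarrow> {u, v} \<in> {{0,1}, {2,3}, {4,5}}"

definition T2_V :: "nat set" where "T2_V = {1..7}"
definition T2_E :: "nat \<Rightarrow> nat \<Rightarrow> bool" where
  "T2_E u v \<longleftrightarrow> {u, v} \<in> {{1,2}, {1,4}, {1,6}, {2,3}, {4,5}, {6,7}}"

end

theory Submission
  imports Defs
begin

text \<open>Each coordinate of a unit square graph is a unit interval graph, and unit interval
  graphs contain neither an induced C4 nor an induced claw. Two disjoint non-adjacent pairs
  whose four cross pairs are all adjacent induce a C4, so they must be separated in different
  coordinates; the complement of 3K2 has three such pairs but there are only two coordinates.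
  In K(2,3) the two vertices of the small side are separated in one coordinate, so the three
  vertices of the large side, adjacent to both, are pairwise separated in the other one, where
  they form a claw with a small-side vertex. Finally, w2, ..., w7 induce the complement of 3K2
  in the complement of T2.\<close>

definition unit_close :: "real \<times> real \<Rightarrow> real \<times> real \<Rightarrow> bool" where
  "unit_close p q \<longleftrightarrow> \<bar>fst p - fst q\<bar> \<le> 1 \<and> \<bar>snd p - snd q\<bar> \<le> 1"

lemma unit_close_iff_coords: "unit_close p q \<longleftrightarrow> (\<forall>c\<in>{fst, snd}. \<bar>c p - c q\<bar> \<le> 1)"
  by (simp add: unit_close_def)

lemma not_unit_close_separating_coord:
  assumes "\<not> unit_close p q"
  obtains c where "c \<in> {fst, snd}" "\<bar>c p - c q\<bar> > 1"
  using assms unfolding unit_close_iff_coords by (meson not_le)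

lemma unit_interval_no_induced_C4:
  fixes a b c d :: real
  assumes "\<bar>a - b\<bar> > 1" "\<bar>c - d\<bar> > 1"
    and "\<bar>a - c\<bar> \<le> 1" "\<bar>a - d\<bar> \<le> 1" "\<bar>b - c\<bar> \<le> 1" "\<bar>b - d\<bar> \<le> 1"
  shows False
  using assms by (simp add: abs_if split: if_splits)

lemma unit_interval_no_induced_claw:
  fixes a c d e :: real
  assumes "\<bar>a - c\<bar> \<le> 1" "\<bar>a - d\<bar> \<le> 1" "\<bar>a - e\<bar> \<le> 1"
    and "\<bar>c - d\<bar> > 1" "\<bar>c - e\<bar> > 1" "\<bar>d - e\<bar> > 1"
  shows False
  using assms by (simp add: abs_if split: if_splits)

lemma unit_close_C4_separated_differently:
  assumes "c \<in> {fst, snd}" "\<bar>c p - c q\<bar> > 1"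
    and "unit_close p r" "unit_close p s" "unit_close q r" "unit_close q s"
  shows "\<bar>c r - c s\<bar> \<le> 1"
proof (rule ccontr)
  assume "\<not> \<bar>c r - c s\<bar> \<le> 1"
  moreover have "\<bar>c p - c r\<bar> \<le> 1" "\<bar>c p - c s\<bar> \<le> 1" "\<bar>c q - c r\<bar> \<le> 1" "\<bar>c q - c s\<bar> \<le> 1"
    using assms(1,3-) unfolding unit_close_def by auto
  ultimately show False
    using assms(2) unit_interval_no_induced_C4 by (meson not_le)
qed

lemma unit_close_no_co_3K2:
  assumes "\<not> unit_close p0 p1" "\<not> unit_close p2 p3" "\<not> unit_close p4 p5"
    and "unit_close p0 p2" "unit_close p0 p3" "unit_close p1 p2" "unit_close p1 p3"
    and "unit_close p0 p4" "unit_close p0 p5" "unit_close p1 p4" "unit_close p1 p5"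
    and "unit_close p2 p4" "unit_close p2 p5" "unit_close p3 p4" "unit_close p3 p5"
  shows False
proof -
  obtain c01 c23 c45 where c: "c01 \<in> {fst, snd}" "c23 \<in> {fst, snd}" "c45 \<in> {fst, snd}"
    and far: "\<bar>c01 p0 - c01 p1\<bar> > 1" "\<bar>c23 p2 - c23 p3\<bar> > 1" "\<bar>c45 p4 - c45 p5\<bar> > 1"
    by (metis assms(1-3) not_unit_close_separating_coord)
  have "c01 = c23 \<or> c01 = c45 \<or> c23 = c45"
    using c by auto
  moreover have "\<bar>c01 p2 - c01 p3\<bar> \<le> 1" "\<bar>c01 p4 - c01 p5\<bar> \<le> 1" "\<bar>c23 p4 - c23 p5\<bar> \<le> 1"
    using unit_close_C4_separated_differently c far assms(4-) by meson+
  ultimately show False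
    using far by auto
qed

lemma unit_close_no_K23:
  assumes "\<not> unit_close a b" "\<not> unit_close c d" "\<not> unit_close c e" "\<not> unit_close d e"
    and "unit_close a c" "unit_close a d" "unit_close a e"
    and "unit_close b c" "unit_close b d" "unit_close b e"
  shows False
proof -
  obtain k where k: "k \<in> {fst, snd}" and far: "\<bar>k a - k b\<bar> > 1"
    using assms(1) by (rule not_unit_close_separating_coord)
  obtain k' where coords: "{k, k'} = {fst, snd}"
    using k by auto
  then have k': "k' \<in> {fst, snd}"
    by auto
  have "\<bar>k' x - k' y\<bar> > 1"
    if xy: "\<not> unit_close x y"
      and close: "unit_close a x" "unit_close a y" "unit_close b x" "unit_close b y"
    for x y
  proof -
    obtain c where "c \<in> {k, k'}" and "\<bar>c x - c y\<bar> > 1"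
      using xy coords by (metis not_unit_close_separating_coord)
    moreover have "\<bar>k x - k y\<bar> \<le> 1"
      using unit_close_C4_separated_differently k far close by blast
    ultimately show ?thesis
      by auto
  qed
  then have "\<bar>k' c - k' d\<bar> > 1" "\<bar>k' c - k' e\<bar> > 1" "\<bar>k' d - k' e\<bar> > 1"
    using assms by blast+
  moreover have "\<bar>k' a - k' c\<bar> \<le> 1" "\<bar>k' a - k' d\<bar> \<le> 1" "\<bar>k' a - k' e\<bar> \<le> 1"
    using k' assms(5-7) unfolding unit_close_def by auto
  ultimately show False
    using unit_interval_no_induced_claw by blast
qed

definition unit_square_realizable :: "'b set \<Rightarrow> ('b \<Rightarrow> 'b \<Rightarrow> bool) \<Rightarrow> bool" where
  "unit_square_realizable V E \<longleftrightarrow>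
     (\<exists>g. \<forall>v\<in>V. \<forall>w\<in>V. v \<noteq> w \<longrightarrow> (unit_close (g v) (g w) \<longleftrightarrow> E v w))"

lemma unit_square_graph_realizable:
  assumes "unit_square_graph V E"
  shows "unit_square_realizable V E"
proof -
  obtain f :: "'a \<Rightarrow> real \<times> real" where "\<forall>v\<in>V. \<forall>w\<in>V. v \<noteq> w \<longrightarrow>
      (E v w \<longleftrightarrow> max \<bar>fst (f v) - fst (f w)\<bar> \<bar>snd (f v) - snd (f w)\<bar> \<le> 1)"
    using assms unfolding unit_square_graph_def by (elim conjE exE) (rule that)
  then show ?thesis
    unfolding unit_square_realizable_def unit_close_def by auto
qed

lemma unit_square_realizable_induced_subgraph:
  assumes "unit_square_realizable V E" and "has_induced_subgraph V E VH EH"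
  shows "unit_square_realizable VH EH"
proof -
  obtain g where g: "\<forall>v\<in>V. \<forall>w\<in>V. v \<noteq> w \<longrightarrow> (unit_close (g v) (g w) \<longleftrightarrow> E v w)"
    using assms(1) unfolding unit_square_realizable_def by (elim exE) (rule that)
  obtain \<phi> where inj: "inj_on \<phi> VH" and sub: "\<phi> ` VH \<subseteq> V"
    and induced: "\<forall>u\<in>VH. \<forall>v\<in>VH. u \<noteq> v \<longrightarrow> (E (\<phi> u) (\<phi> v) \<longleftrightarrow> EH u v)"
    using assms(2) unfolding has_induced_subgraph_def by (elim exE conjE) (rule that)
  have "unit_close (g (\<phi> u)) (g (\<phi> v)) \<longleftrightarrow> EH u v" if "u \<in> VH" "v \<in> VH" "u \<noteq> v" for u v
  proof -
    have "\<phi> u \<noteq> \<phi> v"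
      using inj that by (meson inj_on_eq_iff)
    then show ?thesis
      using g induced sub that by (simp add: image_subset_iff)
  qed
  then show ?thesis
    unfolding unit_square_realizable_def by (intro exI[of _ "g \<circ> \<phi>"]) simp
qed

lemma K23_not_unit_square_realizable: "\<not> unit_square_realizable K23_V K23_E"
proof
  assume "unit_square_realizable K23_V K23_E"
  then obtain g where g: "\<forall>v\<in>K23_V. \<forall>w\<in>K23_V. v \<noteq> w \<longrightarrow> (unit_close (g v) (g w) \<longleftrightarrow> K23_E v w)"
    unfolding unit_square_realizable_def by (elim exE) (rule that)
  show False
    by (rule unit_close_no_K23[of "g 0" "g 1" "g 2" "g 3" "g 4"])
      (simp_all add: g K23_V_def K23_E_def)
qed

lemma co_3K2_not_unit_square_realizable:
  "\<not> unit_square_realizable threeK2_V (compl_graph threeK2_V threeK2_E)"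
proof
  assume "unit_square_realizable threeK2_V (compl_graph threeK2_V threeK2_E)"
  then obtain g where g: "\<forall>v\<in>threeK2_V. \<forall>w\<in>threeK2_V. v \<noteq> w \<longrightarrow>
      (unit_close (g v) (g w) \<longleftrightarrow> compl_graph threeK2_V threeK2_E v w)"
    unfolding unit_square_realizable_def by (elim exE) (rule that)
  show False
    by (rule unit_close_no_co_3K2[of "g 0" "g 1" "g 2" "g 3" "g 4" "g 5"])
      (simp_all add: g threeK2_V_def threeK2_E_def compl_graph_def doubleton_eq_iff)
qed

lemma co_T2_not_unit_square_realizable:
  "\<not> unit_square_realizable T2_V (compl_graph T2_V T2_E)"
proof
  assume "unit_square_realizable T2_V (compl_graph T2_V T2_E)"
  then obtain g where g: "\<forall>v\<in>T2_V. \<forall>w\<in>T2_V. v \<noteq> w \<longrightarrow>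
      (unit_close (g v) (g w) \<longleftrightarrow> compl_graph T2_V T2_E v w)"
    unfolding unit_square_realizable_def by (elim exE) (rule that)
  show False
    by (rule unit_close_no_co_3K2[of "g 2" "g 3" "g 4" "g 5" "g 6" "g 7"])
      (simp_all add: g T2_V_def T2_E_def compl_graph_def doubleton_eq_iff)
qed

theorem mainTheorem7:
  fixes V :: "'a set" and E :: "'a \<Rightarrow> 'a \<Rightarrow> bool"
  assumes "unit_square_graph V E"
  shows "\<not> has_induced_subgraph V E K23_V K23_E \<and>
         \<not> has_induced_subgraph V E threeK2_V (compl_graph threeK2_V threeK2_E) \<and>
         \<not> has_induced_subgraph V E T2_V (compl_graph T2_V T2_E)"
  using unit_square_realizable_induced_subgraph[OF unit_square_graph_realizable[OF assms]]
    K23_not_unit_square_realizable co_3K2_not_unit_square_realizable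
    co_T2_not_unit_square_realizable
  by blast

end
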